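(* Let $\mathcal R$ be a $Z$-regulus in $\mathcal G$ and let $L$ be a directrix of $\mathcal R$. Then the set of all points of $L$ which are contained in some element of $\mathcal R$ is a $Z$-subline of $L$.
   Context: $K$ is a (not necessarily commutative) field with centre $Z$, and $V$ is a left vector space over $K$ of arbitrary (possibly infinite) dimension with $\dim V>2$. $\mathcal G:=\{X\le V\mid X\cong V/X\}$, assumed nonempty. Points are $1$-dimensional and lines $2$-dimensional subspaces; two subspaces meet if they have a common point. $X,Y\in\mathcal G$ are distant if $V=X\oplus Y$. A $Z$-regulus is a subset $\mathcal R\subseteq\mathcal G$ such that (R1) its elements are mutually distant and $|\mathcal R|\ge3$; (R2) if a line meets three mutually distinct elements of $\mathcal R$ then it meets all elements of $\mathcal R$; (R3) $\mathcal R$ is not properly contained in any subset of $\mathcal G$ satisfying (R1) and (R2). A directrix of $\mathcal R$ is a line meeting all elements of $\mathcal R$. A $Z$-subline (or $Z$-chain) of a line $L$ is a set of points of the form $\{K(xa+yb)\mid (x,y)\in Z^2\setminus\{(0,0)\}\}$, where $a,b$ is a basis of $L$. *)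

theory Defs
  imports Main
begin

text \<open>A left vector space V (the whole type 'v) over a skew field K (type 'k) with
  scalar multiplication sc.\<close>

definition left_vs :: "('k::division_ring \<Rightarrow> 'v::ab_group_add \<Rightarrow> 'v) \<Rightarrow> bool" where
  "left_vs sc \<longleftrightarrow>
     (\<forall>a x y. sc a (x + y) = sc a x + sc a y) \<and>
     (\<forall>a b x. sc (a + b) x = sc a x + sc b x) \<and>
     (\<forall>a b x. sc a (sc b x) = sc (a * b) x) \<and>
     (\<forall>x. sc 1 x = x)"

definition centre :: "'k::division_ring set" where
  "centre = {z. \<forall>k. z * k = k * z}"

definition lvs_subspace :: "('k::division_ring \<Rightarrow> 'v::ab_group_add \<Rightarrow> 'v) \<Rightarrow> 'v set \<Rightarrow> bool" where
  "lvs_subspace sc X \<longleftrightarrow> 0 \<in> X \<and> (\<forall>x\<in>X. \<forall>y\<in>X. x + y \<in> X) \<and> (\<forall>k. \<forall>x\<in>X. sc k x \<in> X)"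

definition dim_gt_2 :: "('k::division_ring \<Rightarrow> 'v::ab_group_add \<Rightarrow> 'v) \<Rightarrow> bool" where
  "dim_gt_2 sc \<longleftrightarrow> (\<exists>u v w. \<forall>a b c. sc a u + sc b v + sc c w = 0 \<longrightarrow> a = 0 \<and> b = 0 \<and> c = 0)"

definition coset :: "'v::ab_group_add set \<Rightarrow> 'v \<Rightarrow> 'v set" where
  "coset X v = {v + y | y. y \<in> X}"

text \<open>X is isomorphic (as a left K-space) to the quotient space V/X, whose elements are
  the cosets v + X, with (v+X)+(w+X) = (v+w)+X and k(v+X) = kv+X.\<close>
definition iso_quot :: "('k::division_ring \<Rightarrow> 'v::ab_group_add \<Rightarrow> 'v) \<Rightarrow> 'v set \<Rightarrow> bool" where
  "iso_quot sc X \<longleftrightarrow> (\<exists>\<phi>. bij_betw \<phi> X (range (coset X)) \<and>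
      (\<forall>x\<in>X. \<forall>y\<in>X. \<forall>u\<in>\<phi> x. \<forall>w\<in>\<phi> y. \<phi> (x + y) = coset X (u + w)) \<and>
      (\<forall>k. \<forall>x\<in>X. \<forall>u\<in>\<phi> x. \<phi> (sc k x) = coset X (sc k u)))"

definition Gset :: "('k::division_ring \<Rightarrow> 'v::ab_group_add \<Rightarrow> 'v) \<Rightarrow> 'v set set" where
  "Gset sc = {X. lvs_subspace sc X \<and> iso_quot sc X}"

definition pt_of :: "('k::division_ring \<Rightarrow> 'v::ab_group_add \<Rightarrow> 'v) \<Rightarrow> 'v \<Rightarrow> 'v set" where
  "pt_of sc v = {sc k v | k. True}"

definition is_point :: "('k::division_ring \<Rightarrow> 'v::ab_group_add \<Rightarrow> 'v) \<Rightarrow> 'v set \<Rightarrow> bool" where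
  "is_point sc P \<longleftrightarrow> (\<exists>v. v \<noteq> 0 \<and> P = pt_of sc v)"

definition indep2 :: "('k::division_ring \<Rightarrow> 'v::ab_group_add \<Rightarrow> 'v) \<Rightarrow> 'v \<Rightarrow> 'v \<Rightarrow> bool" where
  "indep2 sc a b \<longleftrightarrow> (\<forall>x y. sc x a + sc y b = 0 \<longrightarrow> x = 0 \<and> y = 0)"

definition span2 :: "('k::division_ring \<Rightarrow> 'v::ab_group_add \<Rightarrow> 'v) \<Rightarrow> 'v \<Rightarrow> 'v \<Rightarrow> 'v set" where
  "span2 sc a b = {sc x a + sc y b | x y. True}"

definition is_line :: "('k::division_ring \<Rightarrow> 'v::ab_group_add \<Rightarrow> 'v) \<Rightarrow> 'v set \<Rightarrow> bool" where
  "is_line sc L \<longleftrightarrow> (\<exists>a b. indep2 sc a b \<and> L = span2 sc a b)"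

definition meets :: "('k::division_ring \<Rightarrow> 'v::ab_group_add \<Rightarrow> 'v) \<Rightarrow> 'v set \<Rightarrow> 'v set \<Rightarrow> bool" where
  "meets sc X Y \<longleftrightarrow> (\<exists>P. is_point sc P \<and> P \<subseteq> X \<and> P \<subseteq> Y)"

definition distant :: "'v::ab_group_add set \<Rightarrow> 'v set \<Rightarrow> bool" where
  "distant X Y \<longleftrightarrow> (\<forall>v. \<exists>x\<in>X. \<exists>y\<in>Y. v = x + y) \<and> X \<inter> Y = {0}"

definition R1 :: "('k::division_ring \<Rightarrow> 'v::ab_group_add \<Rightarrow> 'v) \<Rightarrow> 'v set set \<Rightarrow> bool" where
  "R1 sc R \<longleftrightarrow> (\<forall>X\<in>R. \<forall>Y\<in>R. X \<noteq> Y \<longrightarrow> distant X Y) \<and>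
               (\<exists>A B C. A \<in> R \<and> B \<in> R \<and> C \<in> R \<and> A \<noteq> B \<and> A \<noteq> C \<and> B \<noteq> C)"

definition R2 :: "('k::division_ring \<Rightarrow> 'v::ab_group_add \<Rightarrow> 'v) \<Rightarrow> 'v set set \<Rightarrow> bool" where
  "R2 sc R \<longleftrightarrow> (\<forall>L. is_line sc L \<longrightarrow>
      (\<exists>A B C. A \<in> R \<and> B \<in> R \<and> C \<in> R \<and> A \<noteq> B \<and> A \<noteq> C \<and> B \<noteq> C \<and>
               meets sc L A \<and> meets sc L B \<and> meets sc L C) \<longrightarrow>
      (\<forall>X\<in>R. meets sc L X))"

definition Z_regulus :: "('k::division_ring \<Rightarrow> 'v::ab_group_add \<Rightarrow> 'v) \<Rightarrow> 'v set set \<Rightarrow> bool" where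
  "Z_regulus sc R \<longleftrightarrow> R \<subseteq> Gset sc \<and> R1 sc R \<and> R2 sc R \<and>
     \<not> (\<exists>R'. R \<subset> R' \<and> R' \<subseteq> Gset sc \<and> R1 sc R' \<and> R2 sc R')"

definition directrix :: "('k::division_ring \<Rightarrow> 'v::ab_group_add \<Rightarrow> 'v) \<Rightarrow> 'v set set \<Rightarrow> 'v set \<Rightarrow> bool" where
  "directrix sc R L \<longleftrightarrow> is_line sc L \<and> (\<forall>X\<in>R. meets sc L X)"

definition Z_subline :: "('k::division_ring \<Rightarrow> 'v::ab_group_add \<Rightarrow> 'v) \<Rightarrow> 'v set \<Rightarrow> 'v set set \<Rightarrow> bool" where
  "Z_subline sc L S \<longleftrightarrow> (\<exists>a b. indep2 sc a b \<and> L = span2 sc a b \<and>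
      S = {pt_of sc (sc x a + sc y b) | x y. x \<in> centre \<and> y \<in> centre \<and> (x, y) \<noteq> (0, 0)})"

end

theory Submission
  imports Defs
begin

text \<open>Three elements A, B, C of the regulus are mutually complementary, so C is the graph
  {a + f a} of a linear isomorphism f from A onto B. The subspaces
  W c = {c a + f a} for central c, together with A, are mutually complementary, and every
  line through a and f a (a in A nonzero) meets all of them; conversely a line meeting three
  of them has this form, so the whole family satisfies (R1) and (R2). Any other element X of
  the regulus meets all these lines, which forces X = W c for a single slope c, and c is
  central because X is a subspace. By maximality the regulus consists of A and all W c with c
  central. A directrix meets A, B, C, so it is the line through some u and f u, and it meets
  A in K u and W c in K (c u + f u): a Z-subline.\<close>

lemma centre_commute: "c \<in> centre \<Longrightarrow> c * k = k * c"
  unfolding centre_def by blast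

lemma centre_zero: "0 \<in> centre" and centre_one: "1 \<in> centre"
  unfolding centre_def by simp_all

lemma centre_mult:
  assumes "x \<in> centre" "y \<in> centre"
  shows "x * y \<in> centre"
  unfolding centre_def
proof safe
  fix k
  have "x * y * k = x * (k * y)" by (metis mult.assoc centre_commute assms(2))
  also have "\<dots> = k * (x * y)" by (metis mult.assoc centre_commute assms(1))
  finally show "x * y * k = k * (x * y)" .
qed

lemma centre_inverse:
  assumes "y \<in> centre"
  shows "inverse y \<in> centre"
  unfolding centre_def
proof safe
  fix k :: 'a
  show "inverse y * k = k * inverse y"
  proof (cases "y = 0")
    case False
    have "inverse y * k = inverse y * k * (y * inverse y)" using False by simp
    also have "\<dots> = inverse y * (y * k) * inverse y"
      by (metis mult.assoc centre_commute assms)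
    also have "\<dots> = k * inverse y" using False by (simp add: mult.assoc[symmetric])
    finally show ?thesis .
  qed simp
qed

lemma distant_sym: "distant X Y \<Longrightarrow> distant Y X"
  unfolding distant_def by (auto simp: algebra_simps) (metis add.commute)

locale left_vector_space =
  fixes sc :: "'k::division_ring \<Rightarrow> 'v::ab_group_add \<Rightarrow> 'v"
  assumes left_vs: "left_vs sc"
begin

lemma sc_add_right: "sc a (x + y) = sc a x + sc a y"
  using left_vs unfolding left_vs_def by blast
lemma sc_add_left: "sc (a + b) x = sc a x + sc b x"
  using left_vs unfolding left_vs_def by blast
lemma sc_assoc [simp]: "sc a (sc b x) = sc (a * b) x"
  using left_vs unfolding left_vs_def by blast
lemma sc_one [simp]: "sc 1 x = x"
  using left_vs unfolding left_vs_def by blast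

lemma sc_zero_left [simp]: "sc 0 x = 0"
  using sc_add_left[of 0 0 x] by simp
lemma sc_zero_right [simp]: "sc a 0 = 0"
  using sc_add_right[of a 0 0] by simp
lemma sc_minus_left: "sc (- a) x = - sc a x"
proof -
  have "sc a x + sc (- a) x = 0" using sc_add_left[of a "- a" x] by simp
  then show ?thesis by (metis add_eq_0_iff)
qed
lemma sc_minus_right: "sc a (- x) = - sc a x"
proof -
  have "sc a x + sc a (- x) = 0" using sc_add_right[of a x "- x"] by simp
  then show ?thesis by (metis add_eq_0_iff)
qed
lemma sc_diff_left: "sc (a - b) x = sc a x - sc b x"
  using sc_add_left[of a "- b" x] by (simp add: sc_minus_left)
lemma sc_diff_right: "sc a (x - y) = sc a x - sc a y"
  using sc_add_right[of a x "- y"] by (simp add: sc_minus_right)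

lemmas sc_distribs = sc_add_right sc_add_left sc_diff_left sc_diff_right sc_minus_left sc_minus_right

lemma sc_eq_0_iff: "sc a x = 0 \<longleftrightarrow> a = 0 \<or> x = 0"
proof (cases "a = 0")
  case False
  then have "x = sc (inverse a) (sc a x)" by simp
  then show ?thesis using False by (metis sc_zero_right)
qed simp

lemma sc_right_cancel: "sc a x = sc b x \<Longrightarrow> x \<noteq> 0 \<Longrightarrow> a = b"
  using sc_eq_0_iff[of "a - b" x] by (simp add: sc_diff_left)

lemma subspace_zero: "lvs_subspace sc X \<Longrightarrow> 0 \<in> X"
  by (simp add: lvs_subspace_def)
lemma subspace_add: "lvs_subspace sc X \<Longrightarrow> x \<in> X \<Longrightarrow> y \<in> X \<Longrightarrow> x + y \<in> X"
  by (simp add: lvs_subspace_def)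
lemma subspace_sc: "lvs_subspace sc X \<Longrightarrow> x \<in> X \<Longrightarrow> sc k x \<in> X"
  by (simp add: lvs_subspace_def)
lemma subspace_minus: "lvs_subspace sc X \<Longrightarrow> x \<in> X \<Longrightarrow> - x \<in> X"
  using subspace_sc[of X x "- 1"] by (simp add: sc_minus_left)
lemma subspace_diff: "lvs_subspace sc X \<Longrightarrow> x \<in> X \<Longrightarrow> y \<in> X \<Longrightarrow> x - y \<in> X"
  using subspace_add[of X x "- y"] subspace_minus[of X y] by simp

lemma pt_of_self: "v \<in> pt_of sc v"
  unfolding pt_of_def by (metis (mono_tags) mem_Collect_eq sc_one)
lemma pt_of_subset: "lvs_subspace sc X \<Longrightarrow> v \<in> X \<Longrightarrow> pt_of sc v \<subseteq> X"
  unfolding pt_of_def using subspace_sc by blast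
lemma is_point_pt_of: "v \<noteq> 0 \<Longrightarrow> is_point sc (pt_of sc v)"
  unfolding is_point_def by blast

lemma pt_of_sc:
  assumes "k \<noteq> 0"
  shows "pt_of sc (sc k v) = pt_of sc v"
proof
  show "pt_of sc (sc k v) \<subseteq> pt_of sc v" unfolding pt_of_def by auto
  have "sc j v = sc (j * inverse k) (sc k v)" for j using assms by (simp add: mult.assoc)
  then show "pt_of sc v \<subseteq> pt_of sc (sc k v)" unfolding pt_of_def by blast
qed

lemma meets_iff:
  assumes "lvs_subspace sc X" "lvs_subspace sc Y"
  shows "meets sc X Y \<longleftrightarrow> (\<exists>v. v \<noteq> 0 \<and> v \<in> X \<and> v \<in> Y)"
proof
  assume "meets sc X Y"
  then obtain v where "v \<noteq> 0" "pt_of sc v \<subseteq> X" "pt_of sc v \<subseteq> Y"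
    unfolding meets_def is_point_def by blast
  then show "\<exists>v. v \<noteq> 0 \<and> v \<in> X \<and> v \<in> Y" using pt_of_self by blast
next
  assume "\<exists>v. v \<noteq> 0 \<and> v \<in> X \<and> v \<in> Y"
  then show "meets sc X Y"
    unfolding meets_def using is_point_pt_of pt_of_subset assms by blast
qed

lemma span2_iff: "x \<in> span2 sc a b \<longleftrightarrow> (\<exists>s t. x = sc s a + sc t b)"
  unfolding span2_def by blast

lemma subspace_span2: "lvs_subspace sc (span2 sc a b)"
proof -
  have "0 \<in> span2 sc a b"
    unfolding span2_iff by (metis add_0 sc_zero_left)
  moreover have "x + y \<in> span2 sc a b" if hx: "x \<in> span2 sc a b" and hy: "y \<in> span2 sc a b" for x y
  proof -
    obtain s t s' t' where "x = sc s a + sc t b" "y = sc s' a + sc t' b"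
      using hx hy unfolding span2_iff by blast
    then have "x + y = sc (s + s') a + sc (t + t') b" by (simp add: sc_distribs algebra_simps)
    then show ?thesis unfolding span2_iff by blast
  qed
  moreover have "sc k x \<in> span2 sc a b" if hx: "x \<in> span2 sc a b" for k x
  proof -
    obtain s t where "x = sc s a + sc t b" using hx unfolding span2_iff by blast
    then have "sc k x = sc (k * s) a + sc (k * t) b" by (simp add: sc_distribs)
    then show ?thesis unfolding span2_iff by blast
  qed
  ultimately show ?thesis unfolding lvs_subspace_def by blast
qed

lemma span2_left: "a \<in> span2 sc a b"
  unfolding span2_iff by (metis add.right_neutral sc_one sc_zero_left)
lemma span2_right: "b \<in> span2 sc a b"
  unfolding span2_iff by (metis add_0 sc_one sc_zero_left)
lemma span2_subset: "lvs_subspace sc X \<Longrightarrow> a \<in> X \<Longrightarrow> b \<in> X \<Longrightarrow> span2 sc a b \<subseteq> X"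
  unfolding span2_def using subspace_add subspace_sc by blast
lemma subspace_line: "is_line sc M \<Longrightarrow> lvs_subspace sc M"
  unfolding is_line_def using subspace_span2 by blast

lemma indep2_nonzero: "indep2 sc a b \<Longrightarrow> a \<noteq> 0 \<and> b \<noteq> 0"
  unfolding indep2_def by (metis add.right_neutral add_0 one_neq_zero sc_one sc_zero_left)

lemma indep2_commute: "indep2 sc a b \<longleftrightarrow> indep2 sc b a"
  unfolding indep2_def by (metis add.commute)

lemma not_indep2_sc:
  assumes "\<not> indep2 sc a b" "a \<noteq> 0"
  obtains k where "b = sc k a"
proof -
  obtain x y where xy: "sc x a + sc y b = 0" "\<not> (x = 0 \<and> y = 0)"
    using assms(1) unfolding indep2_def by blast
  have "y \<noteq> 0" using xy assms(2) sc_eq_0_iff by auto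
  have "sc y b = sc (- x) a" using xy(1) by (simp add: sc_minus_left eq_neg_iff_add_eq_0 add.commute)
  then have "b = sc (inverse y * - x) a" using \<open>y \<noteq> 0\<close>
    by (metis left_inverse sc_assoc sc_one)
  then show ?thesis using that by blast
qed

lemma indep2_sc_left:
  assumes "indep2 sc a b" "k \<noteq> 0"
  shows "indep2 sc (sc k a) b"
  using assms unfolding indep2_def by (metis no_zero_divisors sc_assoc)

lemma span2_commute: "span2 sc a b = span2 sc b a"
  unfolding set_eq_iff span2_iff by (metis add.commute)

lemma span2_exchange:
  assumes "x \<noteq> 0"
  shows "span2 sc (sc x a + sc y b) b = span2 sc a b"
proof
  show "span2 sc (sc x a + sc y b) b \<subseteq> span2 sc a b"
    by (intro span2_subset subspace_span2 span2_right) (auto simp: span2_iff)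
  have "a = sc (inverse x) ((sc x a + sc y b) - sc y b)" using assms by simp
  then have "a \<in> span2 sc (sc x a + sc y b) b"
    by (metis subspace_span2 subspace_sc subspace_diff span2_left span2_right)
  then show "span2 sc a b \<subseteq> span2 sc (sc x a + sc y b) b"
    by (intro span2_subset subspace_span2 span2_right)
qed

lemma span2_eq_of_indep_left:
  assumes w: "w = sc x a + sc y b" "x \<noteq> 0"
    and w': "w' \<in> span2 sc a b" and indep: "indep2 sc w w'"
  shows "span2 sc w w' = span2 sc a b"
proof -
  have wb: "span2 sc w b = span2 sc a b" unfolding w(1) using w(2) by (rule span2_exchange)
  then have "w' \<in> span2 sc w b" using w' by simp
  then obtain s t where w'_eq: "w' = sc s w + sc t b" unfolding span2_iff by blast
  have "t \<noteq> 0"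
  proof
    assume "t = 0"
    then have "sc s w + sc (- 1) w' = 0" using w'_eq by (simp add: sc_minus_left)
    then show False using indep unfolding indep2_def by fastforce
  qed
  have "span2 sc w w' = span2 sc w' w" by (rule span2_commute)
  also have "\<dots> = span2 sc b w"
    unfolding w'_eq add.commute[of "sc s w"] using \<open>t \<noteq> 0\<close> by (rule span2_exchange)
  also have "\<dots> = span2 sc a b" using wb span2_commute by blast
  finally show ?thesis .
qed

lemma span2_eq_of_indep:
  assumes w: "w \<in> span2 sc a b" and w': "w' \<in> span2 sc a b" and indep: "indep2 sc w w'"
  shows "span2 sc w w' = span2 sc a b"
proof -
  obtain x y where w_eq: "w = sc x a + sc y b" using w unfolding span2_iff by blast
  have "x \<noteq> 0 \<or> y \<noteq> 0" using indep2_nonzero[OF indep] w_eq by auto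
  then show ?thesis
  proof
    assume "x \<noteq> 0"
    then show ?thesis using span2_eq_of_indep_left[OF w_eq _ w' indep] by blast
  next
    assume "y \<noteq> 0"
    have "w = sc y b + sc x a" using w_eq by (simp add: add.commute)
    moreover have "w' \<in> span2 sc b a" using w' span2_commute by blast
    ultimately have "span2 sc w w' = span2 sc b a"
      using span2_eq_of_indep_left[OF _ \<open>y \<noteq> 0\<close> _ indep] by blast
    then show ?thesis using span2_commute by blast
  qed
qed

lemma line_eq_span2:
  assumes "is_line sc M" "w \<in> M" "w' \<in> M" "indep2 sc w w'"
  shows "M = span2 sc w w'"
  using assms span2_eq_of_indep unfolding is_line_def by metis

lemma not_dim_gt_2_of_span2:
  assumes "\<And>v. v \<in> span2 sc a b"
  shows "\<not> dim_gt_2 sc"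
proof
  assume "dim_gt_2 sc"
  then obtain u v w where uvw: "\<And>x y z. sc x u + sc y v + sc z w = 0 \<Longrightarrow> x = 0 \<and> y = 0 \<and> z = 0"
    unfolding dim_gt_2_def by blast
  show False
  proof (cases "indep2 sc u v")
    case True
    then have "w \<in> span2 sc u v" using span2_eq_of_indep assms by blast
    then obtain s t where "w = sc s u + sc t v" unfolding span2_iff by blast
    then have "sc s u + sc t v + sc (- 1) w = 0" by (simp add: sc_minus_left)
    then show False using uvw by fastforce
  next
    case False
    then obtain x y where "sc x u + sc y v + sc 0 w = 0" "\<not> (x = 0 \<and> y = 0)"
      unfolding indep2_def by auto
    then show False using uvw by blast
  qed
qed

lemma subspace_mem_of_two_combinations:
  assumes "lvs_subspace sc M" "q \<noteq> r" "sc q a + b \<in> M" "sc r a + b \<in> M"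
  shows "a \<in> M" "b \<in> M"
proof -
  have "sc (q - r) a = (sc q a + b) - (sc r a + b)" by (simp add: sc_diff_left)
  then have "sc (inverse (q - r)) (sc (q - r) a) \<in> M"
    using assms by (metis subspace_diff subspace_sc)
  then show "a \<in> M" using assms(2) by simp
  have "b = (sc q a + b) - sc q a" by simp
  then show "b \<in> M" using assms \<open>a \<in> M\<close> by (metis subspace_diff subspace_sc)
qed

lemma subspace_image:
  assumes "lvs_subspace sc X"
    and add: "\<And>x y. \<sigma> (x + y) = \<sigma> x + \<sigma> y" and hom: "\<And>k x. \<sigma> (sc k x) = sc k (\<sigma> x)"
  shows "lvs_subspace sc (\<sigma> ` X)"
proof -
  have "\<sigma> 0 = 0" using add[of 0 0] by simp
  then show ?thesis using assms(1) unfolding lvs_subspace_def by (auto simp flip: add hom)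
qed

lemma image_coset:
  assumes add: "\<And>x y. \<sigma> (x + y) = \<sigma> x + \<sigma> y"
  shows "\<sigma> ` coset X v = coset (\<sigma> ` X) (\<sigma> v)"
proof
  show "\<sigma> ` coset X v \<subseteq> coset (\<sigma> ` X) (\<sigma> v)" unfolding coset_def using add by auto
  have "\<sigma> v + \<sigma> y \<in> \<sigma> ` coset X v" if "y \<in> X" for y
    unfolding add[symmetric] coset_def using that by blast
  then show "coset (\<sigma> ` X) (\<sigma> v) \<subseteq> \<sigma> ` coset X v" unfolding coset_def by blast
qed

lemma bij_betw_image_cosets:
  assumes add: "\<And>x y. \<sigma> (x + y) = \<sigma> x + \<sigma> y" and "bij \<sigma>"
  shows "bij_betw ((`) \<sigma>) (range (coset X)) (range (coset (\<sigma> ` X)))"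
proof (rule bij_betw_imageI)
  show "inj_on ((`) \<sigma>) (range (coset X))"
    using bij_is_inj[OF \<open>bij \<sigma>\<close>] by (simp add: inj_on_def inj_image_eq_iff)
  have "(`) \<sigma> ` range (coset X) = coset (\<sigma> ` X) ` range \<sigma>"
    using image_coset[OF add] by (simp add: image_image)
  then show "(`) \<sigma> ` range (coset X) = range (coset (\<sigma> ` X))"
    using bij_is_surj[OF \<open>bij \<sigma>\<close>] by simp
qed

lemma iso_quot_image:
  assumes "iso_quot sc X"
    and add: "\<And>x y. \<sigma> (x + y) = \<sigma> x + \<sigma> y" and hom: "\<And>k x. \<sigma> (sc k x) = sc k (\<sigma> x)"
    and "bij \<sigma>"
  shows "iso_quot sc (\<sigma> ` X)"
proof -
  obtain \<phi> where bij_\<phi>: "bij_betw \<phi> X (range (coset X))"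
    and \<phi>_add: "\<forall>x\<in>X. \<forall>y\<in>X. \<forall>u\<in>\<phi> x. \<forall>w\<in>\<phi> y. \<phi> (x + y) = coset X (u + w)"
    and \<phi>_sc: "\<forall>k. \<forall>x\<in>X. \<forall>u\<in>\<phi> x. \<phi> (sc k x) = coset X (sc k u)"
    using assms(1) unfolding iso_quot_def by blast
  let ?Y = "\<sigma> ` X" and ?\<tau> = "inv \<sigma>"
  define \<psi> where "\<psi> = (`) \<sigma> \<circ> (\<phi> \<circ> ?\<tau>)"
  have \<tau>\<sigma>: "?\<tau> (\<sigma> x) = x" for x using \<open>bij \<sigma>\<close> by (simp add: bij_is_inj)
  have \<sigma>\<tau>: "\<sigma> (?\<tau> y) = y" for y using \<open>bij \<sigma>\<close> by (simp add: bij_is_surj surj_f_inv_f)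
  have \<tau>_add: "?\<tau> (x + y) = ?\<tau> x + ?\<tau> y" for x y by (metis add \<tau>\<sigma> \<sigma>\<tau>)
  have \<tau>_sc: "?\<tau> (sc k x) = sc k (?\<tau> x)" for k x by (metis hom \<tau>\<sigma> \<sigma>\<tau>)
  have \<tau>_in: "y \<in> ?Y \<Longrightarrow> ?\<tau> y \<in> X" for y using \<tau>\<sigma> by auto
  have "bij_betw ?\<tau> ?Y X" by (rule bij_betw_byWitness[where f' = \<sigma>]) (use \<tau>\<sigma> \<sigma>\<tau> in auto)
  then have "bij_betw \<psi> ?Y (range (coset ?Y))"
    unfolding \<psi>_def
    by (rule bij_betw_trans[OF bij_betw_trans[OF _ bij_\<phi>] bij_betw_image_cosets[OF add \<open>bij \<sigma>\<close>]])
  moreover have "\<psi> (x + y) = coset ?Y (u + w)"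
    if xy: "x \<in> ?Y" "y \<in> ?Y" and uw: "u \<in> \<psi> x" "w \<in> \<psi> y" for x y u w
  proof -
    obtain u0 w0 where "u0 \<in> \<phi> (?\<tau> x)" "u = \<sigma> u0" "w0 \<in> \<phi> (?\<tau> y)" "w = \<sigma> w0"
      using uw unfolding \<psi>_def by auto
    moreover have "\<phi> (?\<tau> x + ?\<tau> y) = coset X (u0 + w0)" using \<phi>_add \<tau>_in xy calculation by blast
    ultimately show ?thesis unfolding \<psi>_def using image_coset[OF add] \<tau>_add add by simp
  qed
  moreover have "\<psi> (sc k x) = coset ?Y (sc k u)" if x: "x \<in> ?Y" and u: "u \<in> \<psi> x" for k x u
  proof -
    obtain u0 where "u0 \<in> \<phi> (?\<tau> x)" "u = \<sigma> u0" using u unfolding \<psi>_def by auto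
    moreover have "\<phi> (sc k (?\<tau> x)) = coset X (sc k u0)" using \<phi>_sc \<tau>_in x calculation by blast
    ultimately show ?thesis unfolding \<psi>_def using image_coset[OF add] \<tau>_sc hom by simp
  qed
  ultimately show ?thesis unfolding iso_quot_def by blast
qed

lemma Gset_image:
  assumes "X \<in> Gset sc"
    and "\<And>x y. \<sigma> (x + y) = \<sigma> x + \<sigma> y" and "\<And>k x. \<sigma> (sc k x) = sc k (\<sigma> x)" and "bij \<sigma>"
  shows "\<sigma> ` X \<in> Gset sc"
  using assms subspace_image iso_quot_image unfolding Gset_def by blast

end

section \<open>The family determined by three complementary subspaces\<close>

locale graph_frame = left_vector_space +
  fixes A B and f
  assumes subspace_A: "lvs_subspace sc A" and subspace_B: "lvs_subspace sc B"
    and distant_A_B: "distant A B"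
    and f_in_B: "a \<in> A \<Longrightarrow> f a \<in> B"
    and f_add: "f (x + y) = f x + f y"
    and f_sc: "f (sc k x) = sc k (f x)"
    and f_eq_0: "a \<in> A \<Longrightarrow> f a = 0 \<Longrightarrow> a = 0"
    and f_onto_B: "b \<in> B \<Longrightarrow> \<exists>a\<in>A. f a = b"

lemma (in left_vector_space) graph_frame_exists:
  assumes sA: "lvs_subspace sc A" and sB: "lvs_subspace sc B" and sC: "lvs_subspace sc C"
    and dAB: "distant A B" and dAC: "distant A C" and dBC: "distant B C"
  obtains f where "graph_frame sc A B f" and "C = {a + f a | a. a \<in> A}"
proof -
  have ex: "\<exists>b. b \<in> B \<and> v + b \<in> C" for v
  proof -
    obtain b c where "b \<in> B" "c \<in> C" "v = b + c" using dBC unfolding distant_def by blast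
    then have "- b \<in> B" "v + - b \<in> C" using subspace_minus[OF sB] by auto
    then show ?thesis by blast
  qed
  define f where "f v = (SOME b. b \<in> B \<and> v + b \<in> C)" for v
  have fB: "f v \<in> B" and fC: "v + f v \<in> C" for v
    using someI_ex[OF ex[of v]] unfolding f_def by auto
  have f_eqI: "f v = b" if "b \<in> B" "v + b \<in> C" for v b
  proof -
    have "b - f v \<in> B" using that fB subspace_diff[OF sB] by blast
    moreover have "(v + b) - (v + f v) \<in> C" using that fC subspace_diff[OF sC] by blast
    then have "b - f v \<in> C" by simp
    ultimately have "b - f v = 0" using dBC unfolding distant_def by blast
    then show ?thesis by simp
  qed
  have "graph_frame sc A B f"
  proof
    show "f (x + y) = f x + f y" for x y
    proof (rule f_eqI)
      show "f x + f y \<in> B" using fB subspace_add[OF sB] by blast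
      have "(x + f x) + (y + f y) \<in> C" using fC subspace_add[OF sC] by blast
      then show "x + y + (f x + f y) \<in> C" by (simp add: algebra_simps)
    qed
    show "f (sc k x) = sc k (f x)" for k x
    proof (rule f_eqI)
      show "sc k (f x) \<in> B" using fB subspace_sc[OF sB] by blast
      have "sc k (x + f x) \<in> C" using fC subspace_sc[OF sC] by blast
      then show "sc k x + sc k (f x) \<in> C" by (simp add: sc_add_right)
    qed
    show "a = 0" if "a \<in> A" "f a = 0" for a
      using that fC[of a] dAC unfolding distant_def by auto
    show "\<exists>a\<in>A. f a = b" if "b \<in> B" for b
    proof -
      obtain a c where "a \<in> A" "c \<in> C" "b = a + c" using dAC unfolding distant_def by blast
      then have "- a \<in> A" "- a + b \<in> C" using subspace_minus[OF sA] by (auto simp: algebra_simps)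
      then show ?thesis using f_eqI[OF that] by blast
    qed
  qed (use assms fB in auto)
  moreover have "C = {a + f a | a. a \<in> A}"
  proof
    show "{a + f a | a. a \<in> A} \<subseteq> C" using fC by blast
    show "C \<subseteq> {a + f a | a. a \<in> A}"
    proof
      fix c assume "c \<in> C"
      moreover obtain a b where "a \<in> A" "b \<in> B" "c = a + b" using dAB unfolding distant_def by blast
      ultimately show "c \<in> {a + f a | a. a \<in> A}" using f_eqI by blast
    qed
  qed
  ultimately show ?thesis using that by blast
qed

context graph_frame
begin

lemma f_zero [simp]: "f 0 = 0"
  using f_add[of 0 0] by simp

lemma f_diff: "f (x - y) = f x - f y"
  using f_add[of "x - y" y] by (simp add: algebra_simps)

lemma f_inj_on: "a \<in> A \<Longrightarrow> a' \<in> A \<Longrightarrow> f a = f a' \<Longrightarrow> a = a'"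
  using f_eq_0[of "a - a'"] subspace_diff[OF subspace_A] by (simp add: f_diff)

lemma f_nonzero: "a \<in> A \<Longrightarrow> a \<noteq> 0 \<Longrightarrow> f a \<noteq> 0"
  using f_eq_0 by blast

lemma A_B_decomp:
  obtains a b where "a \<in> A" "b \<in> B" "v = a + b"
  using distant_A_B unfolding distant_def by blast

lemma A_B_decomp_unique:
  assumes "a \<in> A" "a' \<in> A" "b \<in> B" "b' \<in> B" "a + b = a' + b'"
  shows "a = a' \<and> b = b'"
proof -
  have "a - a' = b' - b" using assms(5) by (simp add: algebra_simps)
  moreover have "a - a' \<in> A" "b' - b \<in> B" using assms subspace_diff subspace_A subspace_B by auto
  ultimately have "a - a' = 0" using distant_A_B unfolding distant_def by (metis IntI singletonD)
  then show ?thesis using assms(5) by simp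
qed

lemma indep2_f:
  assumes "a \<in> A" "a \<noteq> 0"
  shows "indep2 sc a (f a)"
  unfolding indep2_def
proof (intro allI impI)
  fix x y assume "sc x a + sc y (f a) = 0"
  then have "sc x a + sc y (f a) = 0 + 0" by simp
  then have "sc x a = 0 \<and> sc y (f a) = 0"
    using A_B_decomp_unique assms subspace_sc subspace_zero subspace_A subspace_B f_in_B by metis
  then show "x = 0 \<and> y = 0" using assms f_nonzero sc_eq_0_iff by blast
qed

lemma A_nonzero:
  assumes "dim_gt_2 sc"
  obtains a where "a \<in> A" "a \<noteq> 0"
proof -
  have "v \<in> span2 sc 0 0" if "A \<subseteq> {0}" for v
  proof -
    obtain a b where "a \<in> A" "b \<in> B" "v = a + b" by (rule A_B_decomp)
    moreover obtain a' where "a' \<in> A" "f a' = b" using f_onto_B calculation by blast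
    ultimately have "v = 0" using that by (metis f_zero add_0 singletonD subsetD)
    then show ?thesis using span2_left by simp
  qed
  then show ?thesis using that not_dim_gt_2_of_span2 assms by blast
qed

lemma exists_indep2_in_A:
  assumes dim: "dim_gt_2 sc" and a0: "a0 \<in> A" "a0 \<noteq> 0"
  obtains a' where "a' \<in> A" "indep2 sc a0 a'"
proof -
  have "v \<in> span2 sc a0 (f a0)" if dep: "\<forall>a'\<in>A. \<not> indep2 sc a0 a'" for v
  proof -
    have multiple: "\<exists>k. a = sc k a0" if "a \<in> A" for a
      using not_indep2_sc[of a0 a] dep that a0 by metis
    obtain a b where "a \<in> A" "b \<in> B" "v = a + b" by (rule A_B_decomp)
    moreover obtain a2 where "a2 \<in> A" "f a2 = b" using f_onto_B calculation by blast
    ultimately obtain k k2 where "v = sc k a0 + sc k2 (f a0)" using multiple f_sc by metis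
    then show ?thesis unfolding span2_iff by blast
  qed
  then show ?thesis using that not_dim_gt_2_of_span2 dim by blast
qed

definition regulus_member where
  "regulus_member c = {sc c a + f a | a. a \<in> A}"

lemma regulus_member_iff: "v \<in> regulus_member c \<longleftrightarrow> (\<exists>a\<in>A. v = sc c a + f a)"
  unfolding regulus_member_def by blast

lemma regulus_memberI: "a \<in> A \<Longrightarrow> sc c a + f a \<in> regulus_member c"
  unfolding regulus_member_iff by blast

lemma regulus_member_vector_eq:
  assumes "a \<in> A" "a' \<in> A" "sc c a + f a = sc d a' + f a'"
  shows "a = a' \<and> sc c a = sc d a"
  using A_B_decomp_unique[of "sc c a" "sc d a'" "f a" "f a'"] assms subspace_sc[OF subspace_A]
    f_in_B f_inj_on by metis

lemma regulus_member_vector_nonzero: "a \<in> A \<Longrightarrow> a \<noteq> 0 \<Longrightarrow> sc c a + f a \<noteq> 0"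
  using regulus_member_vector_eq[of a 0 c 0] subspace_zero[OF subspace_A] by auto

lemma regulus_member_zero: "regulus_member 0 = B"
  unfolding regulus_member_def using f_in_B f_onto_B by force

lemma regulus_member_one: "regulus_member 1 = {a + f a | a. a \<in> A}"
  unfolding regulus_member_def by simp

lemma subspace_regulus_member:
  assumes "c \<in> centre"
  shows "lvs_subspace sc (regulus_member c)"
proof -
  have "0 \<in> regulus_member c"
    using regulus_memberI[OF subspace_zero[OF subspace_A]] by simp
  moreover have "x + y \<in> regulus_member c"
    if "x \<in> regulus_member c" "y \<in> regulus_member c" for x y
  proof -
    obtain a a' where "a \<in> A" "a' \<in> A" "x = sc c a + f a" "y = sc c a' + f a'"
      using \<open>x \<in> regulus_member c\<close> \<open>y \<in> regulus_member c\<close> unfolding regulus_member_iff by blast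
    then have "a + a' \<in> A" "x + y = sc c (a + a') + f (a + a')"
      using subspace_add[OF subspace_A] by (auto simp: sc_add_right f_add algebra_simps)
    then show ?thesis using regulus_memberI by simp
  qed
  moreover have "sc k x \<in> regulus_member c" if "x \<in> regulus_member c" for k x
  proof -
    obtain a where "a \<in> A" "x = sc c a + f a"
      using \<open>x \<in> regulus_member c\<close> unfolding regulus_member_iff by blast
    then have "sc k a \<in> A" "sc k x = sc c (sc k a) + f (sc k a)"
      using subspace_sc[OF subspace_A] centre_commute[OF assms] by (auto simp: sc_add_right f_sc)
    then show ?thesis using regulus_memberI by metis
  qed
  ultimately show ?thesis unfolding lvs_subspace_def by blast
qed

lemma distant_A_regulus_member: "distant A (regulus_member c)"
  unfolding distant_def
proof
  show "\<forall>v. \<exists>x\<in>A. \<exists>y\<in>regulus_member c. v = x + y"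
  proof
    fix v
    obtain a' b where "a' \<in> A" "b \<in> B" "v = a' + b" by (rule A_B_decomp)
    moreover obtain a where "a \<in> A" "f a = b" using f_onto_B calculation by blast
    ultimately have "a' - sc c a \<in> A" "v = (a' - sc c a) + (sc c a + f a)"
      using subspace_diff subspace_sc subspace_A by auto
    then show "\<exists>x\<in>A. \<exists>y\<in>regulus_member c. v = x + y" using regulus_memberI \<open>a \<in> A\<close> by blast
  qed
  have "v = 0" if vA: "v \<in> A" and vW: "v \<in> regulus_member c" for v
  proof -
    obtain a where a: "a \<in> A" "v + 0 = sc c a + f a" using vW regulus_member_iff by auto
    then have "f a = 0"
      using A_B_decomp_unique vA subspace_sc subspace_zero subspace_A subspace_B f_in_B by metis
    then have "a = 0" using f_eq_0 a(1) by blast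
    then show ?thesis using a by simp
  qed
  then show "A \<inter> regulus_member c = {0}"
    using regulus_memberI[OF subspace_zero[OF subspace_A]] subspace_zero[OF subspace_A] by auto
qed

lemma distant_regulus_members:
  assumes "c \<noteq> d"
  shows "distant (regulus_member c) (regulus_member d)"
  unfolding distant_def
proof
  show "\<forall>v. \<exists>x\<in>regulus_member c. \<exists>y\<in>regulus_member d. v = x + y"
  proof
    fix v
    obtain a' b where v: "a' \<in> A" "b \<in> B" "v = a' + b" by (rule A_B_decomp)
    obtain a0 where "a0 \<in> A" "f a0 = b" using f_onto_B v(2) by blast
    define a where "a = sc (inverse (c - d)) (a' - sc d a0)"
    have "a \<in> A" "a0 - a \<in> A"
      unfolding a_def using \<open>a0 \<in> A\<close> \<open>a' \<in> A\<close> subspace_A by (meson subspace_diff subspace_sc)+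
    have "sc c a + sc d (a0 - a) = sc (c - d) a + sc d a0"
      by (simp add: sc_diff_left sc_diff_right algebra_simps)
    also have "\<dots> = a'" unfolding a_def using assms by simp
    finally have "sc c a + sc d (a0 - a) = a'" .
    then have "v = (sc c a + f a) + (sc d (a0 - a) + f (a0 - a))"
      using v(3) \<open>f a0 = b\<close> by (simp add: f_diff algebra_simps)
    then show "\<exists>x\<in>regulus_member c. \<exists>y\<in>regulus_member d. v = x + y"
      using regulus_memberI \<open>a \<in> A\<close> \<open>a0 - a \<in> A\<close> by blast
  qed
  have "v = 0" if vc: "v \<in> regulus_member c" and vd: "v \<in> regulus_member d" for v
  proof -
    obtain a a' where a: "a \<in> A" "a' \<in> A" "v = sc c a + f a" "v = sc d a' + f a'"
      using vc vd regulus_member_iff by auto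
    then have "a = a'" "sc (c - d) a = 0" using regulus_member_vector_eq by (metis sc_diff_left right_minus_eq)+
    then show ?thesis using a assms sc_eq_0_iff by simp
  qed
  then show "regulus_member c \<inter> regulus_member d = {0}"
    using regulus_memberI[OF subspace_zero[OF subspace_A]] by auto
qed

definition regulus_family where
  "regulus_family = insert A (regulus_member ` centre)"

lemma subspace_of_regulus_family: "X \<in> regulus_family \<Longrightarrow> lvs_subspace sc X"
  unfolding regulus_family_def using subspace_A subspace_regulus_member by blast

lemma distant_of_regulus_family:
  assumes "X \<in> regulus_family" "Y \<in> regulus_family" "X \<noteq> Y"
  shows "distant X Y"
proof (cases "X = A \<or> Y = A")
  case True
  then show ?thesis using assms distant_A_regulus_member distant_sym
    unfolding regulus_family_def by blast
next
  case False
  then obtain c d where "X = regulus_member c" "Y = regulus_member d"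
    using assms unfolding regulus_family_def by blast
  then show ?thesis using assms(3) distant_regulus_members by metis
qed

definition transversal where
  "transversal a = span2 sc a (f a)"

lemma is_line_transversal: "a \<in> A \<Longrightarrow> a \<noteq> 0 \<Longrightarrow> is_line sc (transversal a)"
  unfolding is_line_def transversal_def using indep2_f by blast

lemma transversal_meets_regulus_family:
  assumes a: "a \<in> A" "a \<noteq> 0" and X: "X \<in> regulus_family"
  shows "meets sc (transversal a) X"
proof -
  have T: "lvs_subspace sc (transversal a)" unfolding transversal_def by (rule subspace_span2)
  consider "X = A" | c where "c \<in> centre" "X = regulus_member c"
    using X unfolding regulus_family_def by blast
  then show ?thesis
  proof cases
    case 1
    then show ?thesis using meets_iff[OF T subspace_A] a span2_left
      unfolding transversal_def by blast
  next
    case (2 c)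
    have "sc c a + f a \<in> transversal a" unfolding transversal_def span2_iff by (metis sc_one)
    then show ?thesis
      using meets_iff[OF T subspace_regulus_member[OF 2(1)]] 2(2) a
        regulus_memberI regulus_member_vector_nonzero by blast
  qed
qed

lemma indep2_of_regulus_members:
  assumes "q \<in> centre" "r \<in> centre" "q \<noteq> r"
    and w: "w \<in> regulus_member q" "w \<noteq> 0" and w': "w' \<in> regulus_member r" "w' \<noteq> 0"
  shows "indep2 sc w w'"
  unfolding indep2_def
proof (intro allI impI)
  fix x y assume "sc x w + sc y w' = 0"
  then have "sc x w = sc (- y) w'" by (simp add: sc_minus_left eq_neg_iff_add_eq_0)
  moreover have "sc x w \<in> regulus_member q" "sc (- y) w' \<in> regulus_member r"
    using assms subspace_regulus_member subspace_sc by blast+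
  ultimately have "sc x w = 0" "sc (- y) w' = 0"
    using distant_regulus_members[OF \<open>q \<noteq> r\<close>] unfolding distant_def by auto
  then show "x = 0 \<and> y = 0" using w w' sc_eq_0_iff by auto
qed

lemma not_indep2_of_third_member:
  assumes "a \<in> A" "a' \<in> A" "l \<noteq> 0 \<or> m \<noteq> 0"
    and w: "w = sc l (sc q a + f a) + sc m (sc r a' + f a')"
    and third: "w \<in> A \<or> (\<exists>p\<in>centre. p \<noteq> q \<and> p \<noteq> r \<and> w \<in> regulus_member p)"
  shows "\<not> indep2 sc a a'"
proof -
  have w_eq: "w = (sc (l * q) a + sc (m * r) a') + f (sc l a + sc m a')"
    using w by (simp add: sc_add_right f_add f_sc algebra_simps)
  have inA: "sc (l * q) a + sc (m * r) a' \<in> A" "sc l a + sc m a' \<in> A"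
    using assms subspace_A subspace_add subspace_sc by blast+
  from third show ?thesis
  proof
    assume "w \<in> A"
    then have "f (sc l a + sc m a') = 0"
      using A_B_decomp_unique[OF \<open>w \<in> A\<close> inA(1) subspace_zero[OF subspace_B] f_in_B[OF inA(2)]]
        w_eq by simp
    then have "sc l a + sc m a' = 0" using f_eq_0 inA(2) by blast
    then show ?thesis using assms(3) unfolding indep2_def by blast
  next
    assume "\<exists>p\<in>centre. p \<noteq> q \<and> p \<noteq> r \<and> w \<in> regulus_member p"
    then obtain p a1 where p: "p \<in> centre" "p \<noteq> q" "p \<noteq> r" "a1 \<in> A" "w = sc p a1 + f a1"
      unfolding regulus_member_iff by blast
    have "sc p a1 = sc (l * q) a + sc (m * r) a' \<and> f a1 = f (sc l a + sc m a')"
      using A_B_decomp_unique[OF subspace_sc[OF subspace_A p(4)] inA(1) f_in_B[OF p(4)]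
          f_in_B[OF inA(2)]] p(5) w_eq by simp
    then have "sc p a1 = sc (l * q) a + sc (m * r) a'" "a1 = sc l a + sc m a'"
      using f_inj_on p(4) inA by blast+
    moreover have "sc p (sc l a + sc m a') = sc (l * p) a + sc (m * p) a'"
      using centre_commute[OF p(1)] by (simp add: sc_add_right)
    ultimately have "sc (l * (p - q)) a + sc (m * (p - r)) a' = 0"
      by (simp add: algebra_simps sc_diff_left)
    moreover have "l * (p - q) \<noteq> 0 \<or> m * (p - r) \<noteq> 0" using assms(3) p by auto
    ultimately show ?thesis unfolding indep2_def by blast
  qed
qed

lemma line_through_two_members_and_point:
  assumes M: "is_line sc M" and qr: "q \<in> centre" "r \<in> centre" "q \<noteq> r"
    and w2: "w2 \<in> M" "w2 \<in> regulus_member q" "w2 \<noteq> 0"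
    and w3: "w3 \<in> M" "w3 \<in> regulus_member r" "w3 \<noteq> 0"
    and w1: "w1 \<in> M" "w1 \<noteq> 0"
    and third: "w1 \<in> A \<or> (\<exists>p\<in>centre. p \<noteq> q \<and> p \<noteq> r \<and> w1 \<in> regulus_member p)"
  obtains u where "u \<in> A" "u \<noteq> 0" "M = transversal u"
proof -
  have sM: "lvs_subspace sc M" using M subspace_line by blast
  obtain a where a: "a \<in> A" "w2 = sc q a + f a" using w2(2) regulus_member_iff by blast
  obtain a' where a': "a' \<in> A" "w3 = sc r a' + f a'" using w3(2) regulus_member_iff by blast
  have "a \<noteq> 0" using a w2(3) by auto
  have "M = span2 sc w2 w3"
    using line_eq_span2 M w2 w3 indep2_of_regulus_members qr by blast
  then have "w1 \<in> span2 sc w2 w3" using w1(1) by simp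
  then obtain l m where "w1 = sc l w2 + sc m w3" unfolding span2_iff by blast
  moreover have "l \<noteq> 0 \<or> m \<noteq> 0" using calculation w1(2) by auto
  ultimately have "\<not> indep2 sc a a'"
    using not_indep2_of_third_member[OF a(1) a'(1)] third a(2) a'(2) by blast
  then obtain k where k: "a' = sc k a" using not_indep2_sc \<open>a \<noteq> 0\<close> by blast
  then have "k \<noteq> 0" using a' w3(3) by auto
  have "w3 = sc k (sc r a + f a)"
    using a'(2) k centre_commute[OF qr(2)] by (simp add: sc_add_right f_sc)
  then have "sc r a + f a \<in> M"
    using subspace_sc[OF sM w3(1), of "inverse k"] \<open>k \<noteq> 0\<close> by simp
  then have "a \<in> M" "f a \<in> M"
    using subspace_mem_of_two_combinations[OF sM qr(3)] w2(1) a(2) by blast+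
  then have "M = transversal a"
    using line_eq_span2[OF M _ _ indep2_f[OF a(1) \<open>a \<noteq> 0\<close>]] unfolding transversal_def by blast
  then show ?thesis using that a(1) \<open>a \<noteq> 0\<close> by blast
qed

lemma line_meeting_two_members_and_another:
  assumes M: "is_line sc M" and qr: "q \<in> centre" "r \<in> centre"
    and X: "X \<in> regulus_family"
    and distinct: "X \<noteq> regulus_member q" "X \<noteq> regulus_member r"
      "regulus_member q \<noteq> regulus_member r"
    and meets: "meets sc M X" "meets sc M (regulus_member q)" "meets sc M (regulus_member r)"
  obtains u where "u \<in> A" "u \<noteq> 0" "M = transversal u"
proof -
  have sM: "lvs_subspace sc M" using M subspace_line by blast
  obtain w1 where w1: "w1 \<noteq> 0" "w1 \<in> M" "w1 \<in> X"
    using meets(1) meets_iff[OF sM subspace_of_regulus_family[OF X]] by blast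
  obtain w2 where w2: "w2 \<noteq> 0" "w2 \<in> M" "w2 \<in> regulus_member q"
    using meets(2) meets_iff[OF sM subspace_regulus_member[OF qr(1)]] by blast
  obtain w3 where w3: "w3 \<noteq> 0" "w3 \<in> M" "w3 \<in> regulus_member r"
    using meets(3) meets_iff[OF sM subspace_regulus_member[OF qr(2)]] by blast
  have "w1 \<in> A \<or> (\<exists>p\<in>centre. p \<noteq> q \<and> p \<noteq> r \<and> w1 \<in> regulus_member p)"
    using X w1(3) distinct unfolding regulus_family_def by fastforce
  moreover have "q \<noteq> r" using distinct(3) by blast
  ultimately show ?thesis
    using line_through_two_members_and_point[OF M qr _ w2(2,3,1) w3(2,3,1) w1(2,1)] that by blast
qed

lemma line_meeting_three_members:
  assumes M: "is_line sc M"
    and X: "X1 \<in> regulus_family" "X2 \<in> regulus_family" "X3 \<in> regulus_family"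
    and distinct: "X1 \<noteq> X2" "X1 \<noteq> X3" "X2 \<noteq> X3"
    and meets: "meets sc M X1" "meets sc M X2" "meets sc M X3"
  obtains u where "u \<in> A" "u \<noteq> 0" "M = transversal u"
proof -
  have member: "\<exists>c\<in>centre. Y = regulus_member c" if "Y \<in> regulus_family" "Y \<noteq> A" for Y
    using that unfolding regulus_family_def by blast
  consider "X2 \<noteq> A" "X3 \<noteq> A" | "X1 \<noteq> A" "X3 \<noteq> A" | "X1 \<noteq> A" "X2 \<noteq> A"
    using distinct by blast
  then show ?thesis
  proof cases
    case 1
    then obtain q r where q: "q \<in> centre" "X2 = regulus_member q"
      and r: "r \<in> centre" "X3 = regulus_member r"
      using member X by blast
    show ?thesis
      using line_meeting_two_members_and_another[OF M q(1) r(1) X(1)] distinct meets that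
      unfolding q(2) r(2) by blast
  next
    case 2
    then obtain q r where q: "q \<in> centre" "X1 = regulus_member q"
      and r: "r \<in> centre" "X3 = regulus_member r"
      using member X by blast
    show ?thesis
      using line_meeting_two_members_and_another[OF M q(1) r(1) X(2)] distinct meets that
      unfolding q(2) r(2) by blast
  next
    case 3
    then obtain q r where q: "q \<in> centre" "X1 = regulus_member q"
      and r: "r \<in> centre" "X2 = regulus_member r"
      using member X by blast
    show ?thesis
      using line_meeting_two_members_and_another[OF M q(1) r(1) X(3)] distinct meets that
      unfolding q(2) r(2) by blast
  qed
qed

lemma R2_of_subset_regulus_family:
  assumes S: "S \<subseteq> regulus_family"
  shows "R2 sc S"
  unfolding R2_def
proof (intro allI impI ballI)
  fix M X assume M: "is_line sc M" and "X \<in> S"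
    and "\<exists>X1 X2 X3. X1 \<in> S \<and> X2 \<in> S \<and> X3 \<in> S \<and> X1 \<noteq> X2 \<and> X1 \<noteq> X3 \<and> X2 \<noteq> X3 \<and>
      meets sc M X1 \<and> meets sc M X2 \<and> meets sc M X3"
  then obtain X1 X2 X3 where "X1 \<in> S" "X2 \<in> S" "X3 \<in> S" "X1 \<noteq> X2" "X1 \<noteq> X3" "X2 \<noteq> X3"
    "meets sc M X1" "meets sc M X2" "meets sc M X3" by blast
  then obtain u where "u \<in> A" "u \<noteq> 0" "M = transversal u"
    using line_meeting_three_members[OF M] S by blast
  then show "meets sc M X" using transversal_meets_regulus_family S \<open>X \<in> S\<close> by blast
qed

subsection \<open>Subspaces meeting all transversals\<close>

context
  fixes X
  assumes subspace_X: "lvs_subspace sc X" and distant_A_X: "distant A X"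
    and transversals_meet_X: "\<And>a. a \<in> A \<Longrightarrow> a \<noteq> 0 \<Longrightarrow> meets sc (transversal a) X"
begin

lemma A_inter_X: "x \<in> A \<Longrightarrow> x \<in> X \<Longrightarrow> x = 0"
  using distant_A_X unfolding distant_def by blast

lemma slope_exists:
  assumes a: "a \<in> A" "a \<noteq> 0"
  obtains t where "sc t a + f a \<in> X"
proof -
  obtain w where w: "w \<noteq> 0" "w \<in> transversal a" "w \<in> X"
    using transversals_meet_X[OF a] meets_iff[OF subspace_span2 subspace_X]
    unfolding transversal_def by blast
  then obtain x y where w_eq: "w = sc x a + sc y (f a)" unfolding transversal_def span2_iff by blast
  have "y \<noteq> 0"
  proof
    assume "y = 0"
    then have "w \<in> A" using w_eq a subspace_A subspace_sc by simp
    then show False using A_inter_X w by blast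
  qed
  then have "sc (inverse y) w = sc (inverse y * x) a + f a" unfolding w_eq by (simp add: sc_add_right)
  moreover have "sc (inverse y) w \<in> X" using w subspace_X subspace_sc by blast
  ultimately show ?thesis using that by metis
qed

lemma slope_eq_of_indep2:
  assumes ab: "a \<in> A" "b \<in> A" "indep2 sc a b"
    and X: "sc t a + f a \<in> X" "sc s b + f b \<in> X"
  shows "t = s"
proof -
  have "a + b \<noteq> 0" using ab(3) unfolding indep2_def by (metis one_neq_zero sc_one)
  moreover have abA: "a + b \<in> A" using ab subspace_A subspace_add by blast
  ultimately obtain u where u: "sc u (a + b) + f (a + b) \<in> X" using slope_exists by blast
  have "(sc t a + f a) + (sc s b + f b) - (sc u (a + b) + f (a + b)) \<in> X"
    using subspace_diff[OF subspace_X subspace_add[OF subspace_X X] u] .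
  moreover have "(sc t a + f a) + (sc s b + f b) - (sc u (a + b) + f (a + b))
      = sc (t - u) a + sc (s - u) b"
    by (simp add: sc_diff_left sc_add_right f_add algebra_simps)
  moreover have "sc (t - u) a + sc (s - u) b \<in> A" using ab subspace_A subspace_sc subspace_add by blast
  ultimately have "sc (t - u) a + sc (s - u) b = 0" using A_inter_X by metis
  then have "t - u = 0 \<and> s - u = 0" using ab(3) unfolding indep2_def by blast
  then show ?thesis by simp
qed

text \<open>Here dim V > 2 enters: it makes A at least two-dimensional, so the slopes of any two
  nonzero vectors of A can be compared through a vector independent of both.\<close>

lemma constant_slope:
  assumes "dim_gt_2 sc"
  obtains c where "\<And>a. a \<in> A \<Longrightarrow> sc c a + f a \<in> X"
proof -
  obtain a0 where a0: "a0 \<in> A" "a0 \<noteq> 0" using A_nonzero assms by blast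
  obtain a' where a': "a' \<in> A" "indep2 sc a0 a'" using exists_indep2_in_A assms a0 by blast
  obtain c where c: "sc c a0 + f a0 \<in> X" using slope_exists a0 by blast
  obtain c' where c': "sc c' a' + f a' \<in> X"
    using slope_exists a'(1) indep2_nonzero[OF a'(2)] by blast
  have "c' = c" using slope_eq_of_indep2[OF a0(1) a' c c'] by simp
  have "sc c a + f a \<in> X" if a: "a \<in> A" "a \<noteq> 0" for a
  proof -
    obtain t where t: "sc t a + f a \<in> X" using slope_exists a by blast
    show ?thesis
    proof (cases "indep2 sc a a0")
      case True
      then show ?thesis using slope_eq_of_indep2[OF a(1) a0(1) True t c] t by simp
    next
      case False
      then obtain k where k: "a = sc k a0"
        using not_indep2_sc indep2_commute a0(2) by metis
      moreover have "k \<noteq> 0" using k a(2) by auto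
      ultimately have "indep2 sc a a'" using indep2_sc_left[OF a'(2)] by simp
      then show ?thesis using slope_eq_of_indep2[OF a(1) a'(1) _ t c'] t \<open>c' = c\<close> by simp
    qed
  qed
  moreover have "sc c 0 + f 0 \<in> X" using subspace_zero[OF subspace_X] by simp
  ultimately show ?thesis using that by metis
qed

lemma constant_slope_central:
  assumes c: "\<And>a. a \<in> A \<Longrightarrow> sc c a + f a \<in> X" and a0: "a0 \<in> A" "a0 \<noteq> 0"
  shows "c \<in> centre"
  unfolding centre_def
proof safe
  fix k
  have ka: "sc k a0 \<in> A" using a0 subspace_A subspace_sc by blast
  have "sc k (sc c a0 + f a0) - (sc c (sc k a0) + f (sc k a0)) \<in> X"
    using subspace_diff[OF subspace_X subspace_sc[OF subspace_X c[OF a0(1)]] c[OF ka]] .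
  moreover have "sc k (sc c a0 + f a0) - (sc c (sc k a0) + f (sc k a0)) = sc (k * c - c * k) a0"
    by (simp add: sc_add_right f_sc sc_diff_left)
  moreover have "sc (k * c - c * k) a0 \<in> A" using a0 subspace_A subspace_sc by blast
  ultimately have "sc (k * c - c * k) a0 = 0" using A_inter_X by metis
  then show "c * k = k * c" using sc_eq_0_iff a0(2) by auto
qed

lemma eq_regulus_member_of_constant_slope:
  assumes c: "\<And>a. a \<in> A \<Longrightarrow> sc c a + f a \<in> X"
  shows "X = regulus_member c"
proof
  show "regulus_member c \<subseteq> X" using c unfolding regulus_member_def by blast
  show "X \<subseteq> regulus_member c"
  proof
    fix x assume x: "x \<in> X"
    obtain a b where ab: "a \<in> A" "b \<in> B" "x = a + b" by (rule A_B_decomp)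
    obtain a2 where a2: "a2 \<in> A" "f a2 = b" using f_onto_B ab by blast
    have "x - (sc c a2 + f a2) \<in> X" using x c[OF a2(1)] subspace_X subspace_diff by blast
    moreover have "x - (sc c a2 + f a2) = a - sc c a2" using ab a2 by simp
    moreover have "a - sc c a2 \<in> A" using ab a2 subspace_A subspace_sc subspace_diff by blast
    ultimately have "x = sc c a2 + f a2" using A_inter_X by (metis eq_iff_diff_eq_0)
    then show "x \<in> regulus_member c" using a2 regulus_memberI by blast
  qed
qed

lemma regulus_member_of_meets_transversals:
  assumes "dim_gt_2 sc"
  shows "X \<in> regulus_member ` centre"
proof -
  obtain c where c: "\<And>a. a \<in> A \<Longrightarrow> sc c a + f a \<in> X" using constant_slope assms by blast
  obtain a0 where "a0 \<in> A" "a0 \<noteq> 0" using A_nonzero assms by blast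
  then show ?thesis using constant_slope_central[OF c] eq_regulus_member_of_constant_slope[OF c] by blast
qed

end

definition proj_A where
  "proj_A v = (SOME a. a \<in> A \<and> v - a \<in> B)"

lemma proj_A: "proj_A v \<in> A" "v - proj_A v \<in> B"
proof -
  obtain a b where "a \<in> A" "b \<in> B" "v = a + b" by (rule A_B_decomp)
  then have "\<exists>a. a \<in> A \<and> v - a \<in> B" by (metis add_diff_cancel_left')
  then show "proj_A v \<in> A" "v - proj_A v \<in> B" unfolding proj_A_def by (metis (mono_tags) someI_ex)+
qed

lemma proj_A_eqI: "a \<in> A \<Longrightarrow> v - a \<in> B \<Longrightarrow> proj_A v = a"
  using A_B_decomp_unique[of "proj_A v" a "v - proj_A v" "v - a"] proj_A by simp

lemma proj_A_add: "proj_A (x + y) = proj_A x + proj_A y"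
proof (rule proj_A_eqI)
  show "proj_A x + proj_A y \<in> A" using proj_A subspace_A subspace_add by blast
  have "(x - proj_A x) + (y - proj_A y) \<in> B" using proj_A subspace_B subspace_add by blast
  then show "x + y - (proj_A x + proj_A y) \<in> B" by (simp add: algebra_simps)
qed

lemma proj_A_sc: "proj_A (sc k x) = sc k (proj_A x)"
proof (rule proj_A_eqI)
  show "sc k (proj_A x) \<in> A" using proj_A subspace_A subspace_sc by blast
  have "sc k (x - proj_A x) \<in> B" using proj_A subspace_B subspace_sc by blast
  then show "sc k x - sc k (proj_A x) \<in> B" by (simp add: sc_diff_right)
qed

text \<open>Gset is invariant under linear automorphisms, and scaling the A-component by a central
  c \<noteq> 0 is one that carries regulus_member 1 onto regulus_member c.\<close>

lemma regulus_member_in_Gset: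
  assumes W1: "regulus_member 1 \<in> Gset sc" and c: "c \<in> centre" "c \<noteq> 0"
  shows "regulus_member c \<in> Gset sc"
proof -
  define \<sigma> where "\<sigma> v = sc c (proj_A v) + (v - proj_A v)" for v
  have add: "\<sigma> (x + y) = \<sigma> x + \<sigma> y" for x y
    unfolding \<sigma>_def proj_A_add by (simp add: sc_add_right algebra_simps)
  have hom: "\<sigma> (sc k x) = sc k (\<sigma> x)" for k x
    unfolding \<sigma>_def proj_A_sc using centre_commute[OF c(1)] by (simp add: sc_add_right sc_diff_right)
  have inv: "\<sigma> (sc (inverse c) (proj_A v) + (v - proj_A v)) = v"
    and inv': "sc (inverse c) (proj_A (\<sigma> v)) + (\<sigma> v - proj_A (\<sigma> v)) = v" for v
  proof -
    have "proj_A (sc k (proj_A v) + (v - proj_A v)) = sc k (proj_A v)" for k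
      using proj_A subspace_A subspace_sc by (intro proj_A_eqI) auto
    then show "\<sigma> (sc (inverse c) (proj_A v) + (v - proj_A v)) = v"
      and "sc (inverse c) (proj_A (\<sigma> v)) + (\<sigma> v - proj_A (\<sigma> v)) = v"
      unfolding \<sigma>_def using c(2) by simp_all
  qed
  have "bij \<sigma>"
    by (rule bij_betw_byWitness[where f' = "\<lambda>v. sc (inverse c) (proj_A v) + (v - proj_A v)"])
      (use inv inv' in auto)
  moreover have "\<sigma> (a + f a) = sc c a + f a" if "a \<in> A" for a
  proof -
    have "proj_A (a + f a) = a" using that f_in_B by (intro proj_A_eqI) auto
    then show ?thesis unfolding \<sigma>_def by simp
  qed
  moreover have "regulus_member d = (\<lambda>a. sc d a + f a) ` A" for d
    unfolding regulus_member_def by blast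
  ultimately have "\<sigma> ` regulus_member 1 = regulus_member c"
    by (simp add: image_image cong: image_cong)
  then show ?thesis using Gset_image[OF W1 add hom \<open>bij \<sigma>\<close>] by simp
qed

lemma regulus_family_subset_Gset:
  assumes "A \<in> Gset sc" "B \<in> Gset sc" "regulus_member 1 \<in> Gset sc"
  shows "regulus_family \<subseteq> Gset sc"
  using assms regulus_member_in_Gset regulus_member_zero unfolding regulus_family_def by auto

lemma regulus_eq_regulus_family:
  assumes dim: "dim_gt_2 sc" and R: "Z_regulus sc R"
    and in_R: "A \<in> R" "B \<in> R" "regulus_member 1 \<in> R"
    and distinct: "A \<noteq> B" "A \<noteq> regulus_member 1" "B \<noteq> regulus_member 1"
  shows "R = regulus_family"
proof -
  have RG: "R \<subseteq> Gset sc" and R1: "R1 sc R" and R2: "R2 sc R"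
    and max: "\<not> (\<exists>R'. R \<subset> R' \<and> R' \<subseteq> Gset sc \<and> R1 sc R' \<and> R2 sc R')"
    using R unfolding Z_regulus_def by auto
  have in_family: "A \<in> regulus_family" "B \<in> regulus_family" "regulus_member 1 \<in> regulus_family"
    unfolding regulus_family_def using regulus_member_zero centre_zero centre_one by auto
  have meets_R: "meets sc (transversal a) X" if "X \<in> R" "a \<in> A" "a \<noteq> 0" for X a
    using R2 that in_R distinct is_line_transversal transversal_meets_regulus_family[OF that(2,3)]
      in_family unfolding R2_def by blast
  have "R \<subseteq> regulus_family"
  proof
    fix X assume X: "X \<in> R"
    show "X \<in> regulus_family"
    proof (cases "X = A")
      case False
      then have "distant A X" using R1 X in_R unfolding R1_def by blast
      moreover have "lvs_subspace sc X" using X RG unfolding Gset_def by blast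
      ultimately show ?thesis
        using regulus_member_of_meets_transversals[OF _ _ meets_R[OF X] dim]
        unfolding regulus_family_def by blast
    qed (simp add: in_family)
  qed
  moreover have "regulus_family \<subseteq> Gset sc"
    using regulus_family_subset_Gset RG in_R by blast
  moreover have "R1 sc regulus_family"
    unfolding R1_def using distant_of_regulus_family in_family distinct by blast
  moreover have "R2 sc regulus_family" by (rule R2_of_subset_regulus_family) simp
  ultimately show ?thesis using max by blast
qed

lemma point_of_transversal_in_regulus_family:
  assumes u: "u \<in> A" "u \<noteq> 0"
    and v: "v \<in> transversal u" "v \<noteq> 0" "v \<in> X" and X: "X \<in> regulus_family"
  obtains x y where "x \<in> centre" "y \<in> centre" "(x, y) \<noteq> (0, 0)"
    "pt_of sc v = pt_of sc (sc x u + sc y (f u))"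
proof -
  obtain x y where "v = sc x u + sc y (f u)" using v(1) unfolding transversal_def span2_iff by blast
  then have v_eq: "v = sc x u + f (sc y u)" by (simp add: f_sc)
  have yu: "sc x u \<in> A" "sc y u \<in> A" using u subspace_A subspace_sc by blast+
  consider "X = A" | c where "c \<in> centre" "X = regulus_member c"
    using X unfolding regulus_family_def by blast
  then show ?thesis
  proof cases
    case 1
    have "sc x u + f (sc y u) = v + 0" using v_eq by simp
    then have "sc x u = v \<and> f (sc y u) = 0"
      using A_B_decomp_unique[OF yu(1) _ f_in_B[OF yu(2)] subspace_zero[OF subspace_B]] v(3) 1
      by blast
    then have "sc y u = 0" "v = sc x u" using f_eq_0[OF yu(2)] by auto
    then have "x \<noteq> 0" using v(2) by auto
    then have "pt_of sc v = pt_of sc (sc 1 u + sc 0 (f u))"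
      using \<open>v = sc x u\<close> pt_of_sc by simp
    then show ?thesis by (rule that[OF centre_one centre_zero, rotated]) simp
  next
    case (2 c)
    then obtain a where a: "a \<in> A" "v = sc c a + f a" using v(3) regulus_member_iff by blast
    then have "sc x u + f (sc y u) = sc c a + f a" using v_eq by simp
    then have "sc x u = sc c a \<and> f (sc y u) = f a"
      using A_B_decomp_unique[OF yu(1) subspace_sc[OF subspace_A a(1)] f_in_B[OF yu(2)] f_in_B[OF a(1)]]
      by blast
    then have "sc x u = sc c a" "a = sc y u" using f_inj_on[OF yu(2) a(1)] by auto
    then have "sc x u = sc (y * c) u" using centre_commute[OF 2(1)] by simp
    then have "x = y * c" using sc_right_cancel u(2) by blast
    then have v_y: "v = sc y (sc c u + sc 1 (f u))" using v_eq by (simp add: sc_add_right f_sc)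
    then have "y \<noteq> 0" using v(2) by auto
    then have "pt_of sc v = pt_of sc (sc c u + sc 1 (f u))" using v_y pt_of_sc by simp
    then show ?thesis by (rule that[OF 2(1) centre_one, rotated]) simp
  qed
qed

lemma central_combination_in_regulus_family:
  assumes u: "u \<in> A" and xy: "x \<in> centre" "y \<in> centre"
  obtains X where "X \<in> regulus_family" "sc x u + sc y (f u) \<in> X"
proof (cases "y = 0")
  case True
  then have "sc x u + sc y (f u) \<in> A" using u subspace_A subspace_sc by simp
  then show ?thesis using that unfolding regulus_family_def by blast
next
  case False
  define c where "c = inverse y * x"
  have c: "c \<in> centre" unfolding c_def using centre_mult centre_inverse xy by blast
  have "sc x u + sc y (f u) = sc y (sc c u + f u)"
    using False unfolding c_def by (simp add: sc_add_right mult.assoc[symmetric])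
  then have "sc x u + sc y (f u) \<in> regulus_member c"
    using regulus_memberI[OF u] subspace_regulus_member[OF c] subspace_sc by metis
  then show ?thesis using that c unfolding regulus_family_def by blast
qed

lemma regulus_points_of_transversal:
  assumes u: "u \<in> A" "u \<noteq> 0"
  shows "{P. is_point sc P \<and> P \<subseteq> transversal u \<and> (\<exists>X\<in>regulus_family. P \<subseteq> X)} =
    {pt_of sc (sc x u + sc y (f u)) | x y. x \<in> centre \<and> y \<in> centre \<and> (x, y) \<noteq> (0, 0)}"
    (is "?points = ?subline")
proof
  show "?points \<subseteq> ?subline"
  proof
    fix P assume "P \<in> ?points"
    then obtain v X where v: "v \<noteq> 0" "P = pt_of sc v" "P \<subseteq> transversal u"
      and X: "X \<in> regulus_family" "P \<subseteq> X"
      unfolding is_point_def by blast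
    then have "v \<in> transversal u" "v \<in> X" using pt_of_self by blast+
    then obtain x y where "x \<in> centre" "y \<in> centre" "(x, y) \<noteq> (0, 0)"
      "pt_of sc v = pt_of sc (sc x u + sc y (f u))"
      using point_of_transversal_in_regulus_family[OF u _ v(1) _ X(1)] by blast
    then show "P \<in> ?subline" using v(2) by blast
  qed
  show "?subline \<subseteq> ?points"
  proof
    fix P assume "P \<in> ?subline"
    then obtain x y where xy: "x \<in> centre" "y \<in> centre" "(x, y) \<noteq> (0, 0)"
      and P: "P = pt_of sc (sc x u + sc y (f u))" by blast
    let ?v = "sc x u + sc y (f u)"
    have "?v \<noteq> 0" using indep2_f[OF u] xy(3) unfolding indep2_def by auto
    then have "is_point sc P" unfolding P by (rule is_point_pt_of)
    have "?v \<in> transversal u" unfolding transversal_def span2_iff by blast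
    then have "P \<subseteq> transversal u"
      unfolding P transversal_def by (rule pt_of_subset[OF subspace_span2])
    obtain X where X: "X \<in> regulus_family" "?v \<in> X"
      using central_combination_in_regulus_family[OF u(1) xy(1,2)] by blast
    then have "P \<subseteq> X" unfolding P by (intro pt_of_subset subspace_of_regulus_family)
    then show "P \<in> ?points" using \<open>is_point sc P\<close> \<open>P \<subseteq> transversal u\<close> X(1) by blast
  qed
qed

end

theorem corollary4p7:
  fixes sc :: "'k::division_ring \<Rightarrow> 'v::ab_group_add \<Rightarrow> 'v"
    and R :: "'v set set" and L :: "'v set"
  assumes "left_vs sc"
    and "dim_gt_2 sc"
    and "Gset sc \<noteq> {}"
    and "Z_regulus sc R"
    and "directrix sc R L"
  shows "Z_subline sc L {P. is_point sc P \<and> P \<subseteq> L \<and> (\<exists>X\<in>R. P \<subseteq> X)}"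
proof -
  interpret left_vector_space sc by unfold_locales (rule assms(1))
  have R: "R \<subseteq> Gset sc" "R1 sc R" using assms(4) unfolding Z_regulus_def by auto
  then obtain A B C where ABC: "A \<in> R" "B \<in> R" "C \<in> R" "A \<noteq> B" "A \<noteq> C" "B \<noteq> C"
    unfolding R1_def by blast
  have sub: "lvs_subspace sc X" if "X \<in> R" for X using R(1) that unfolding Gset_def by blast
  have dist: "distant X Y" if "X \<in> R" "Y \<in> R" "X \<noteq> Y" for X Y
    using R(2) that unfolding R1_def by blast
  obtain f where frame: "graph_frame sc A B f" and C: "C = {a + f a | a. a \<in> A}"
    using graph_frame_exists[OF sub[OF ABC(1)] sub[OF ABC(2)] sub[OF ABC(3)]
        dist[OF ABC(1,2,4)] dist[OF ABC(1,3,5)] dist[OF ABC(2,3,6)]] .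
  interpret graph_frame sc A B f by (rule frame)
  have C_eq: "C = regulus_member 1" using C regulus_member_one by simp
  have R_eq: "R = regulus_family"
    using regulus_eq_regulus_family[OF assms(2,4)] ABC unfolding C_eq by blast
  obtain u where u: "u \<in> A" "u \<noteq> 0" "L = transversal u"
    using line_meeting_three_members[of L A B C] assms(5) ABC
    unfolding directrix_def R_eq by blast
  show ?thesis
    unfolding Z_subline_def R_eq u(3) regulus_points_of_transversal[OF u(1,2)]
    using indep2_f[OF u(1,2)] unfolding transversal_def by blast
qed

end
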